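(* Consider a human–algorithm system (as defined in the context) whose combining function $c$ is convex as a function of $(a,h)\in[0,\infty)^2$. Then the system does not exhibit complementarity.
   Context: A human–algorithm system consists of: an integer $N\ge1$ (number of regimes); probabilities $p_1,\dots,p_N\ge 0$ with $\sum_i p_i=1$; algorithmic losses $a_1,\dots,a_N\ge 0$ and unaided-human losses $h_1,\dots,h_N\ge0$; and a combining function $c:[0,\infty)^2\to\mathbb{R}$ satisfying $\min(a,h)\le c(a,h)\le\max(a,h)$ for all $a,h\ge0$, where $c(a_i,h_i)$ is the loss of the combined system in regime $i$. Write $A=\sum_i p_i a_i$ and $H=\sum_i p_i h_i$. The system exhibits complementarity if $\sum_{i=1}^N p_i\,c(a_i,h_i)<\min(A,H)$. *)

theory Defs
  imports "HOL-Analysis.Analysis"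
begin

end

theory Submission
  imports Defs
begin

(* Jensen's inequality at the point (A, H) of mean losses bounds the expected combined loss
   from below by c A H, which is at least min A H because c lies between its arguments. *)

lemma convex_on_case_prod_sum:
  fixes a :: "'i \<Rightarrow> 'a::real_vector" and h :: "'i \<Rightarrow> 'b::real_vector"
  assumes "finite S" "S \<noteq> {}"
    and "convex_on C (\<lambda>(x, y). f x y)"
    and "(\<Sum>i\<in>S. p i) = 1" "\<And>i. i \<in> S \<Longrightarrow> p i \<ge> 0"
    and "\<And>i. i \<in> S \<Longrightarrow> (a i, h i) \<in> C"
  shows "f (\<Sum>i\<in>S. p i *\<^sub>R a i) (\<Sum>i\<in>S. p i *\<^sub>R h i) \<le> (\<Sum>i\<in>S. p i * f (a i) (h i))"
proof -
  have "(\<Sum>i\<in>S. p i *\<^sub>R (a i, h i)) = ((\<Sum>i\<in>S. p i *\<^sub>R a i), (\<Sum>i\<in>S. p i *\<^sub>R h i))"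
    by (simp add: prod_eq_iff fst_sum snd_sum)
  moreover have "(\<lambda>(x, y). f x y) (\<Sum>i\<in>S. p i *\<^sub>R (a i, h i))
      \<le> (\<Sum>i\<in>S. p i * (\<lambda>(x, y). f x y) (a i, h i))"
    using assms by (intro convex_on_sum) auto
  ultimately show ?thesis by simp
qed

theorem lemma4:
  fixes N :: nat
    and p a h :: "nat \<Rightarrow> real"
    and c :: "real \<Rightarrow> real \<Rightarrow> real"
  assumes N_pos: "N \<ge> 1"
    and p_nonneg: "\<And>i. i < N \<Longrightarrow> p i \<ge> 0"
    and p_sum: "(\<Sum>i<N. p i) = 1"
    and a_nonneg: "\<And>i. i < N \<Longrightarrow> a i \<ge> 0"
    and h_nonneg: "\<And>i. i < N \<Longrightarrow> h i \<ge> 0"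
    and c_between: "\<And>x y. x \<ge> 0 \<Longrightarrow> y \<ge> 0 \<Longrightarrow> min x y \<le> c x y \<and> c x y \<le> max x y"
    and c_convex: "convex_on ({0..} \<times> {0..}) (\<lambda>(x, y). c x y)"
  shows "\<not> ((\<Sum>i<N. p i * c (a i) (h i)) < min (\<Sum>i<N. p i * a i) (\<Sum>i<N. p i * h i))"
proof -
  define A where "A = (\<Sum>i<N. p i * a i)"
  define H where "H = (\<Sum>i<N. p i * h i)"
  have "A \<ge> 0" "H \<ge> 0"
    unfolding A_def H_def by (auto intro!: sum_nonneg simp: p_nonneg a_nonneg h_nonneg)
  then have "min A H \<le> c A H"
    using c_between by blast
  also have "c A H \<le> (\<Sum>i<N. p i * c (a i) (h i))"
    using convex_on_case_prod_sum[OF _ _ c_convex p_sum, of a h] N_pos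
    by (simp add: A_def H_def p_nonneg a_nonneg h_nonneg lessThan_empty_iff)
  finally show ?thesis
    unfolding A_def H_def by linarith
qed

end
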